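(* Let $f=\frac1n\sum_{i=1}^nf_i$ with each $f_i:\mathbb{R}^d\to\mathbb{R}$ differentiable and $\nabla f_i$ $L_i$-Lipschitz. Fix a proper sampling with marginals $p_i$ and pair matrix $\mathbf P$, and $v\in\mathbb{R}^n$ with $\mathbf P-pp^\top\preceq\mathrm{Diag}(p_1v_1,\dots,p_nv_n)$, and let $Q=\sum_{i=1}^n\frac{v_iL_i^2}{p_in^2}$. For the iterates of ProxSARAH-AS (any stepsize $\eta>0$, any inner length $m$), for every $j\ge1$ and $1\le t\le m$, $$E\big[\|\mathcal V_t^{(j)}-\nabla f(x_t^{(j)})\|^2\big]\le Q\sum_{k=1}^tE\big[\|x_k^{(j)}-x_{k-1}^{(j)}\|^2\big].$$
   Context: A sampling is a random subset $S\subseteq[n]$ with $p_i=\mathrm{Prob}(i\in S)>0$ and $\mathbf P_{ij}=\mathrm{Prob}(\{i,j\}\subseteq S)$; $\preceq$ is the positive semidefinite order. $r:\mathbb{R}^d\to\mathbb{R}$ has proximal mapping $\mathrm{prox}_{\eta r}(y)=\arg\min_x\{\frac1{2\eta}\|x-y\|^2+r(x)\}$ (nonempty). ProxSARAH-AS: for $j=1,2,\dots$: $x_0^{(j)}=\tilde x^{(j)}$, $\mathcal V_0^{(j)}=\frac1n\sum_i\nabla f_i(x_0^{(j)})$, $x_1^{(j)}=x_0^{(j)}$; for $t=1,\dots,m$: draw $S_t^{(j)}$ from the sampling independently of the past, $\mathcal V_t^{(j)}=\sum_{i\in S_t^{(j)}}\frac1{np_i}(\nabla f_i(x_t^{(j)})-\nabla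 f_i(x_{t-1}^{(j)}))+\mathcal V_{t-1}^{(j)}$, $x_{t+1}^{(j)}\in\mathrm{prox}_{\eta r}(x_t^{(j)}-\eta\mathcal V_t^{(j)})$; then $\tilde x^{(j+1)}=x_{m+1}^{(j)}$. *)

theory Defs
  imports "HOL-Probability.Probability"
begin

definition marg :: "nat set pmf \<Rightarrow> nat \<Rightarrow> real" where
  "marg samp i = measure_pmf.prob samp {S. i \<in> S}"

definition pairprob :: "nat set pmf \<Rightarrow> nat \<Rightarrow> nat \<Rightarrow> real" where
  "pairprob samp i j = measure_pmf.prob samp {S. i \<in> S \<and> j \<in> S}"

definition loewner_le :: "nat \<Rightarrow> (nat \<Rightarrow> nat \<Rightarrow> real) \<Rightarrow> (nat \<Rightarrow> nat \<Rightarrow> real) \<Rightarrow> bool" where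
  "loewner_le n A B \<longleftrightarrow>
     (\<forall>x::nat \<Rightarrow> real. (\<Sum>i\<in>{1..n}. \<Sum>j\<in>{1..n}. x i * (B i j - A i j) * x j) \<ge> 0)"

definition diag_mat :: "(nat \<Rightarrow> real) \<Rightarrow> nat \<Rightarrow> nat \<Rightarrow> real" where
  "diag_mat d i j = (if i = j then d i else 0)"

definition prox_set :: "real \<Rightarrow> ('a::real_normed_vector \<Rightarrow> real) \<Rightarrow> 'a \<Rightarrow> 'a set" where
  "prox_set \<eta> r y = {x. \<forall>z. 1 / (2 * \<eta>) * (norm (x - y))\<^sup>2 + r x \<le> 1 / (2 * \<eta>) * (norm (z - y))\<^sup>2 + r z}"

text \<open>Parameters: n, gradients g i of f_i, marginals p, stepsize eta, inner length m,
  prox selection sel j t (picks x_{t+1}^{(j)} from the prox set), initial point x0,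
  and the sample path om (om (j,t) = S_t^{(j)}).
  sarah_st ... j t = (x_t^{(j)}, V_t^{(j)}, x_{t+1}^{(j)}).
  Epochs are numbered from 1; epoch 0 is a dummy copy of the initial data and is never used.\<close>

fun sarah_st ::
  "nat \<Rightarrow> (nat \<Rightarrow> 'a::real_inner \<Rightarrow> 'a) \<Rightarrow> (nat \<Rightarrow> real) \<Rightarrow> real \<Rightarrow> nat
   \<Rightarrow> (nat \<Rightarrow> nat \<Rightarrow> 'a \<Rightarrow> 'a) \<Rightarrow> 'a \<Rightarrow> (nat \<times> nat \<Rightarrow> nat set) \<Rightarrow> nat \<Rightarrow> nat \<Rightarrow> 'a \<times> 'a \<times> 'a"
  where
  "sarah_st n g p \<eta> m sel x0 om 0 0 =
     (x0, (1 / real n) *\<^sub>R (\<Sum>i\<in>{1..n}. g i x0), x0)"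
| "sarah_st n g p \<eta> m sel x0 om (Suc 0) 0 =
     (x0, (1 / real n) *\<^sub>R (\<Sum>i\<in>{1..n}. g i x0), x0)"
| "sarah_st n g p \<eta> m sel x0 om (Suc (Suc j)) 0 =
     (let xt = snd (snd (sarah_st n g p \<eta> m sel x0 om (Suc j) m))
      in (xt, (1 / real n) *\<^sub>R (\<Sum>i\<in>{1..n}. g i xt), xt))"
| "sarah_st n g p \<eta> m sel x0 om j (Suc t) =
     (let (xprev, Vprev, xcur) = sarah_st n g p \<eta> m sel x0 om j t;
          V = (\<Sum>i\<in>om (j, Suc t). (1 / (real n * p i)) *\<^sub>R (g i xcur - g i xprev)) + Vprev
      in (xcur, V, sel j (Suc t) (xcur - \<eta> *\<^sub>R V)))"

definition sarah_x where
  "sarah_x n g p \<eta> m sel x0 om j t = fst (sarah_st n g p \<eta> m sel x0 om j t)"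

definition sarah_V where
  "sarah_V n g p \<eta> m sel x0 om j t = fst (snd (sarah_st n g p \<eta> m sel x0 om j t))"

end

theory Submission
  imports Defs
begin

(* Write e_t = V_t - grad f(x_t).  Once everything sampled before S_t is fixed, x_{t-1}, x_t and
   V_{t-1} are fixed, and e_t = e_{t-1} + sum_i (1[i in S_t] - p_i) c_i with
   c_i = (grad f_i(x_t) - grad f_i(x_{t-1})) / (n p_i).  The centred indicators have mean 0 and
   covariance P - p p^T, so the cross term vanishes and the ESO inequality bounds the noise by
   sum_i v_i p_i |c_i|^2 <= Q |x_t - x_{t-1}|^2 (Lipschitz gradients).  Hence
   E|e_t|^2 <= E|e_{t-1}|^2 + Q E|x_t - x_{t-1}|^2, and e_0 = 0 at the start of every epoch.
   The conditioning is Fubini on the product of the coordinate (j, t) of the sample path with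
   all the other coordinates, the state before step t being independent of that coordinate. *)

context
  fixes samp :: "nat set pmf"
begin

lemma integrable_indicator_pmf [simp]: "integrable (measure_pmf samp) (indicator A :: _ \<Rightarrow> real)"
  by (rule integrable_real_indicator) (simp_all add: less_top[symmetric])

lemma integral_centered_indicator:
  "(\<integral>S. indicator {S. i \<in> S} S - marg samp i \<partial>samp) = (0::real)"
  by (simp add: marg_def)

lemma centered_indicator_product:
  "(indicator {S. i \<in> S} S - marg samp i) * (indicator {S. k \<in> S} S - marg samp k)
      = indicator {S. i \<in> S \<and> k \<in> S} S - marg samp k * indicator {S. i \<in> S} S
        - marg samp i * indicator {S. k \<in> S} S + marg samp i * (marg samp k :: real)"
  by (simp add: indicator_def algebra_simps)

lemma integral_centered_indicator_product:
  "(\<integral>S. (indicator {S. i \<in> S} S - marg samp i) * (indicator {S. k \<in> S} S - marg samp k) \<partial>samp)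
     = pairprob samp i k - marg samp i * marg samp k"
  unfolding centered_indicator_product by (simp add: pairprob_def marg_def)

lemma integrable_centered_indicator_product:
  "integrable (measure_pmf samp) (\<lambda>S. (indicator {S. i \<in> S} S - marg samp i) * (indicator {S. k \<in> S} S - marg samp k) :: real)"
  by (simp add: centered_indicator_product)

lemma integral_norm2_centered_sample_sum:
  fixes c :: "nat \<Rightarrow> 'a::real_inner"
  assumes "finite I"
  shows "(\<integral>S. (norm (D + (\<Sum>i\<in>I. (indicator {S. i \<in> S} S - marg samp i) *\<^sub>R c i)))\<^sup>2 \<partial>samp)
       = (norm D)\<^sup>2 + (\<Sum>i\<in>I. \<Sum>k\<in>I. (pairprob samp i k - marg samp i * marg samp k) * (c i \<bullet> c k))"
proof -
  define z where "z i S = (indicator {S. i \<in> S} S - marg samp i :: real)" for i S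
  have "(norm (D + (\<Sum>i\<in>I. z i S *\<^sub>R c i)))\<^sup>2
      = (norm D)\<^sup>2 + (\<Sum>i\<in>I. 2 * (D \<bullet> c i) * z i S) + (\<Sum>i\<in>I. \<Sum>k\<in>I. z i S * z k S * (c i \<bullet> c k))" for S
    by (simp add: power2_norm_eq_inner inner_sum_left inner_sum_right
        inner_commute sum_distrib_left algebra_simps)
  moreover have "integrable (measure_pmf samp) (\<lambda>S. z i S)" for i
    by (simp add: z_def)
  moreover have "integrable (measure_pmf samp) (\<lambda>S. z i S * z k S)" for i k
    unfolding z_def by (rule integrable_centered_indicator_product)
  moreover have "(\<integral>S. z i S \<partial>samp) = 0" for i
    unfolding z_def by (rule integral_centered_indicator)
  moreover have "(\<integral>S. z i S * z k S \<partial>samp) = pairprob samp i k - marg samp i * marg samp k" for i k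
    unfolding z_def by (rule integral_centered_indicator_product)
  ultimately show ?thesis
    by (simp add: z_def[symmetric] integral_sum)
qed

end

lemma loewner_le_diag_mat_entry:
  assumes "loewner_le n A (diag_mat d)" "i \<in> {1..n}"
  shows "A i i \<le> d i"
proof -
  have "0 \<le> (\<Sum>a\<in>{1..n}. \<Sum>b\<in>{1..n}. of_bool (a = i) * (diag_mat d a b - A a b) * of_bool (b = i))"
    using assms(1) unfolding loewner_le_def by (rule spec)
  also have "\<dots> = d i - A i i"
  proof -
    have "of_bool (a = i) * (diag_mat d a b - A a b) * of_bool (b = i)
        = (if b = i then if a = i then diag_mat d a b - A a b else 0 else 0)" for a b
      by simp
    then show ?thesis
      using assms(2) by (simp only: sum.delta) (simp add: diag_mat_def)
  qed
  finally show ?thesis by simp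
qed

lemma loewner_le_diag_mat_inner:
  fixes y :: "nat \<Rightarrow> 'a::euclidean_space"
  assumes "loewner_le n A (diag_mat d)"
  shows "(\<Sum>i\<in>{1..n}. \<Sum>k\<in>{1..n}. A i k * (y i \<bullet> y k)) \<le> (\<Sum>i\<in>{1..n}. d i * (norm (y i))\<^sup>2)"
proof -
  have coord: "(\<Sum>i\<in>{1..n}. \<Sum>k\<in>{1..n}. A i k * (x i * x k)) \<le> (\<Sum>i\<in>{1..n}. d i * (x i)\<^sup>2)" for x
  proof -
    have "(\<Sum>i\<in>{1..n}. \<Sum>k\<in>{1..n}. x i * diag_mat d i k * x k) = (\<Sum>i\<in>{1..n}. d i * (x i)\<^sup>2)"
      by (simp add: diag_mat_def if_distrib if_distribR power2_eq_square mult_ac cong: if_cong)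
    moreover have "0 \<le> (\<Sum>i\<in>{1..n}. \<Sum>k\<in>{1..n}. x i * diag_mat d i k * x k)
        - (\<Sum>i\<in>{1..n}. \<Sum>k\<in>{1..n}. A i k * (x i * x k))"
      using assms unfolding loewner_le_def sum_subtractf[symmetric]
      by (auto dest!: spec[of _ x] simp: algebra_simps)
    ultimately show ?thesis by simp
  qed
  have "(\<Sum>i\<in>{1..n}. \<Sum>k\<in>{1..n}. A i k * (y i \<bullet> y k))
      = (\<Sum>b\<in>Basis. \<Sum>i\<in>{1..n}. \<Sum>k\<in>{1..n}. A i k * ((y i \<bullet> b) * (y k \<bullet> b)))"
    by (subst euclidean_inner) (simp add: sum_distrib_left sum.swap[where A = Basis])
  also have "\<dots> \<le> (\<Sum>b\<in>Basis. \<Sum>i\<in>{1..n}. d i * (y i \<bullet> b)\<^sup>2)"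
    by (intro sum_mono coord)
  also have "\<dots> = (\<Sum>i\<in>{1..n}. \<Sum>b\<in>Basis. d i * (y i \<bullet> b)\<^sup>2)"
    by (rule sum.swap)
  also have "\<dots> = (\<Sum>i\<in>{1..n}. d i * (norm (y i))\<^sup>2)"
    unfolding power2_norm_eq_inner euclidean_inner[of "y i" "y i" for i]
    by (simp add: sum_distrib_left power2_eq_square)
  finally show ?thesis .
qed

definition full_gradient :: "nat \<Rightarrow> (nat \<Rightarrow> 'a \<Rightarrow> 'a) \<Rightarrow> 'a \<Rightarrow> 'a::real_vector" where
  "full_gradient n g x = (1 / real n) *\<^sub>R (\<Sum>i\<in>{1..n}. g i x)"

lemma gradient_unique:
  fixes a b :: "'a::real_inner"
  assumes "(f has_derivative (\<lambda>h. a \<bullet> h)) (at x)" "(f has_derivative (\<lambda>h. b \<bullet> h)) (at x)"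
  shows "a = b"
proof -
  have "a \<bullet> (a - b) = b \<bullet> (a - b)"
    using has_derivative_unique[OF assms] by meson
  then have "(a - b) \<bullet> (a - b) = 0"
    by (simp add: inner_diff_left)
  then show ?thesis
    by simp
qed

lemma gradient_of_average:
  fixes g :: "nat \<Rightarrow> 'a::real_inner \<Rightarrow> 'a"
  assumes "\<And>i. i \<in> {1..n} \<Longrightarrow> (f i has_derivative (\<lambda>h. g i x \<bullet> h)) (at x)"
    and "((\<lambda>y. (1 / real n) * (\<Sum>i\<in>{1..n}. f i y)) has_derivative (\<lambda>h. G \<bullet> h)) (at x)"
  shows "G = full_gradient n g x"
proof (rule gradient_unique[OF assms(2)])
  have "((\<lambda>y. (1 / real n) * (\<Sum>i\<in>{1..n}. f i y)) has_derivative (\<lambda>h. (1 / real n) * (\<Sum>i\<in>{1..n}. g i x \<bullet> h))) (at x)"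
    by (intro has_derivative_mult_right has_derivative_sum assms(1))
  then show "((\<lambda>y. (1 / real n) * (\<Sum>i\<in>{1..n}. f i y)) has_derivative (\<lambda>h. full_gradient n g x \<bullet> h)) (at x)"
    by (simp add: full_gradient_def inner_sum_left)
qed

lemma integral_PiM_split_coordinate:
  fixes P :: "'s measure" and F :: "('i \<Rightarrow> 's) \<Rightarrow> real"
  assumes P: "prob_space P" and F: "integrable (PiM UNIV (\<lambda>_. P)) F"
  shows "integral\<^sup>L (PiM UNIV (\<lambda>_. P)) F = (\<integral>X. (\<integral>S. F (X(a := S)) \<partial>P) \<partial>PiM (UNIV - {a}) (\<lambda>_. P))"
    and "integrable (PiM (UNIV - {a}) (\<lambda>_. P)) (\<lambda>X. \<integral>S. F (X(a := S)) \<partial>P)"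
proof -
  let ?M = "PiM UNIV (\<lambda>_. P)" and ?N = "PiM (UNIV - {a}) (\<lambda>_. P)"
  let ?ins = "\<lambda>(S, X). X(a := S)"
  interpret N: prob_space ?N
    using P by (intro prob_space_PiM) simp
  interpret PN: pair_sigma_finite P ?N
    using P by (simp add: N.sigma_finite_measure_axioms pair_sigma_finite.intro prob_space_imp_sigma_finite)
  have distr: "distr (P \<Otimes>\<^sub>M ?N) ?M ?ins = ?M"
    using distr_pair_PiM_eq_PiM[of "UNIV - {a}" "\<lambda>_. P" a] P
    by (simp add: insert_absorb)
  have ins: "?ins \<in> P \<Otimes>\<^sub>M ?N \<rightarrow>\<^sub>M ?M"
  proof (rule measurable_PiM_single')
    fix i
    show "(\<lambda>\<omega>. ?ins \<omega> i) \<in> P \<Otimes>\<^sub>M ?N \<rightarrow>\<^sub>M P"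
    proof (cases "i = a")
      case False
      then have "(\<lambda>\<omega>. snd \<omega> i) \<in> P \<Otimes>\<^sub>M ?N \<rightarrow>\<^sub>M P"
        by (intro measurable_compose[OF measurable_snd measurable_component_singleton]) auto
      with False show ?thesis by (simp add: case_prod_beta')
    qed (simp add: case_prod_beta')
  next
    show "?ins \<in> space (P \<Otimes>\<^sub>M ?N) \<rightarrow> (UNIV \<rightarrow>\<^sub>E space P)"
    proof
      fix w assume "w \<in> space (P \<Otimes>\<^sub>M ?N)"
      then have "fst w \<in> space P" "snd w \<in> (UNIV - {a}) \<rightarrow>\<^sub>E space P"
        unfolding space_pair_measure space_PiM by (simp_all add: mem_Times_iff)
      from PiE_fun_upd[where x = a, OF this] show "?ins w \<in> UNIV \<rightarrow>\<^sub>E space P"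
        by (simp add: case_prod_beta)
    qed
  qed
  have F_meas: "F \<in> borel_measurable ?M"
    using F by auto
  have int: "integrable (P \<Otimes>\<^sub>M ?N) (\<lambda>(S, X). F (X(a := S)))"
    using F integrable_distr_eq[OF ins F_meas] distr by (simp add: case_prod_beta')
  have "integral\<^sup>L ?M F = (\<integral>(S, X). F (X(a := S)) \<partial>(P \<Otimes>\<^sub>M ?N))"
    using integral_distr[OF ins F_meas] distr by (simp add: case_prod_beta')
  also have "\<dots> = (\<integral>S. (\<integral>X. F (X(a := S)) \<partial>?N) \<partial>P)"
    using PN.integral_fst'[OF int] by simp
  also have "\<dots> = (\<integral>X. (\<integral>S. F (X(a := S)) \<partial>P) \<partial>?N)"
    using PN.Fubini_integral[OF int] by simp
  finally show "integral\<^sup>L ?M F = (\<integral>X. (\<integral>S. F (X(a := S)) \<partial>P) \<partial>?N)" .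
  show "integrable ?N (\<lambda>X. \<integral>S. F (X(a := S)) \<partial>P)"
    using PN.integrable_snd[OF int] by simp
qed

lemma AE_PiM_in_set_pmf:
  "AE om in PiM (UNIV :: 'i::countable set) (\<lambda>_. measure_pmf samp). om \<in> UNIV \<rightarrow> set_pmf samp"
proof -
  have "AE om in PiM UNIV (\<lambda>_. measure_pmf samp). om a \<in> set_pmf samp" for a :: 'i
    by (rule AE_PiM_component) (auto simp: prob_space_measure_pmf AE_measure_pmf)
  then show ?thesis
    by (simp add: Pi_iff AE_all_countable)
qed

definition sarah_step ::
  "nat \<Rightarrow> (nat \<Rightarrow> 'a::real_inner \<Rightarrow> 'a) \<Rightarrow> (nat \<Rightarrow> real) \<Rightarrow> real \<Rightarrow> (nat \<Rightarrow> nat \<Rightarrow> 'a \<Rightarrow> 'a)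
   \<Rightarrow> nat \<Rightarrow> nat \<Rightarrow> 'a \<times> 'a \<times> 'a \<Rightarrow> nat set \<Rightarrow> 'a \<times> 'a \<times> 'a" where
  "sarah_step n g p \<eta> sel j t w S =
     (let (xprev, Vprev, xcur) = w;
          V = (\<Sum>i\<in>S. (1 / (real n * p i)) *\<^sub>R (g i xcur - g i xprev)) + Vprev
      in (xcur, V, sel j (Suc t) (xcur - \<eta> *\<^sub>R V)))"

definition sarah_restart :: "nat \<Rightarrow> (nat \<Rightarrow> 'a::real_inner \<Rightarrow> 'a) \<Rightarrow> 'a \<times> 'a \<times> 'a \<Rightarrow> 'a \<times> 'a \<times> 'a" where
  "sarah_restart n g w = (let xt = snd (snd w) in (xt, full_gradient n g xt, xt))"

lemma sarah_st_Suc: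
  "sarah_st n g p \<eta> m sel x0 om j (Suc t) =
     sarah_step n g p \<eta> sel j t (sarah_st n g p \<eta> m sel x0 om j t) (om (j, Suc t))"
  unfolding sarah_step_def sarah_st.simps(4) ..

lemma sarah_st_restart:
  "sarah_st n g p \<eta> m sel x0 om (Suc (Suc j)) 0 = sarah_restart n g (sarah_st n g p \<eta> m sel x0 om (Suc j) m)"
  unfolding sarah_restart_def full_gradient_def sarah_st.simps(3) ..

lemma sarah_x_Suc:
  "sarah_x n g p \<eta> m sel x0 om j (Suc t) = snd (snd (sarah_st n g p \<eta> m sel x0 om j t))"
  by (simp add: sarah_x_def sarah_st_Suc sarah_step_def Let_def split: prod.split)

lemma sarah_V_epoch_start:
  assumes "1 \<le> j"
  shows "sarah_V n g p \<eta> m sel x0 om j 0 = full_gradient n g (sarah_x n g p \<eta> m sel x0 om j 0)"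
proof -
  obtain j' where "j = Suc j'" using assms by (cases j) auto
  then show ?thesis
    by (cases j') (simp_all add: sarah_V_def sarah_x_def full_gradient_def Let_def)
qed

lemma sarah_step_infinite_sample:
  "infinite S \<Longrightarrow> sarah_step n g p \<eta> sel j t w S = sarah_step n g p \<eta> sel j t w {}"
  by (simp add: sarah_step_def)

lemma sarah_st_nonanticipating:
  assumes "\<And>j' t'. j' < j \<or> (j' = j \<and> t' \<le> t) \<Longrightarrow> om (j', t') = om' (j', t')"
  shows "sarah_st n g p \<eta> m sel x0 om j t = sarah_st n g p \<eta> m sel x0 om' j t"
  using assms
proof (induction n g p \<eta> m sel x0 om j t rule: sarah_st.induct)
  case (3 n g p \<eta> m sel x0 om j)
  have "sarah_st n g p \<eta> m sel x0 om (Suc j) m = sarah_st n g p \<eta> m sel x0 om' (Suc j) m"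
    by (rule "3.IH") (use "3.prems" in auto)
  then show ?case by (simp only: sarah_st_restart)
next
  case (4 n g p \<eta> m sel x0 om j t)
  have "sarah_st n g p \<eta> m sel x0 om j t = sarah_st n g p \<eta> m sel x0 om' j t"
    by (rule "4.IH") (use "4.prems" in auto)
  moreover have "om (j, Suc t) = om' (j, Suc t)"
    using "4.prems" by auto
  ultimately show ?case by (simp only: sarah_st_Suc)
qed auto

lemma sarah_st_finite_image:
  assumes "finite \<S>"
  shows "finite ((\<lambda>om. sarah_st n g p \<eta> m sel x0 om j t) ` (UNIV \<rightarrow> \<S>))"
proof (induction n g p \<eta> m sel x0 "undefined :: nat \<times> nat \<Rightarrow> nat set" j t rule: sarah_st.induct)
  case (3 n g p \<eta> m sel x0 j)
  then show ?case by (simp only: sarah_st_restart) (metis finite_imageI image_image)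
next
  case (4 n g p \<eta> m sel x0 j t)
  let ?st = "\<lambda>om. sarah_st n g p \<eta> m sel x0 om j t"
  have "(\<lambda>om. sarah_st n g p \<eta> m sel x0 om j (Suc t)) ` (UNIV \<rightarrow> \<S>)
      \<subseteq> (\<lambda>(w, S). sarah_step n g p \<eta> sel j t w S) ` (?st ` (UNIV \<rightarrow> \<S>) \<times> \<S>)"
    unfolding sarah_st_Suc by (rule image_subsetI, rule image_eqI[OF _ SigmaI]) auto
  then show ?case
    by (rule finite_subset) (intro finite_imageI finite_SigmaI "4" assms)
qed (auto simp: image_constant_conv)

(* Infinite samples act like the empty one (sums over infinite sets are 0), so every state ranges
   over a countable set; since nat set is uncountable, this is what makes the states measurable
   for the product sigma-algebra. *)
lemma sarah_st_measurable:
  fixes samp :: "nat set pmf"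
  shows "countable (range (\<lambda>om. sarah_st n g p \<eta> m sel x0 om j t)) \<and>
    (\<lambda>om. sarah_st n g p \<eta> m sel x0 om j t) \<in> PiM UNIV (\<lambda>_. measure_pmf samp) \<rightarrow>\<^sub>M count_space UNIV"
proof (induction n g p \<eta> m sel x0 "undefined :: nat \<times> nat \<Rightarrow> nat set" j t rule: sarah_st.induct)
  case (3 n g p \<eta> m sel x0 j)
  let ?st = "\<lambda>om. sarah_st n g p \<eta> m sel x0 om (Suc j) m"
  have "range (\<lambda>om. sarah_restart n g (?st om)) = sarah_restart n g ` range ?st"
    by auto
  then show ?case
    using "3" by (simp only: sarah_st_restart) (auto intro: measurable_compose)
next
  case (4 n g p \<eta> m sel x0 j t)
  let ?st = "\<lambda>om. sarah_st n g p \<eta> m sel x0 om j t"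
  let ?step = "\<lambda>w S. sarah_step n g p \<eta> sel j t w S"
  have IH: "countable (range ?st)" "?st \<in> PiM UNIV (\<lambda>_. measure_pmf samp) \<rightarrow>\<^sub>M count_space UNIV"
    using "4" by auto
  have "range (\<lambda>om. ?step (?st om) (om (j, Suc t))) \<subseteq> case_prod ?step ` (range ?st \<times> Collect finite)"
  proof (rule image_subsetI)
    fix om :: "nat \<times> nat \<Rightarrow> nat set"
    show "?step (?st om) (om (j, Suc t)) \<in> case_prod ?step ` (range ?st \<times> Collect finite)"
    proof (cases "finite (om (j, Suc t))")
      case True
      then show ?thesis by (intro image_eqI[where x = "(?st om, om (j, Suc t))"]) auto
    next
      case False
      then show ?thesis
        unfolding sarah_step_infinite_sample[OF False] by (intro image_eqI[where x = "(?st om, {})"]) auto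
    qed
  qed
  then have "countable (range (\<lambda>om. ?step (?st om) (om (j, Suc t))))"
    by (rule countable_subset) (intro countable_image countable_SIGMA IH(1) countable_Collect_finite)
  moreover have "(\<lambda>om. ?step (?st om) (om (j, Suc t))) \<in> PiM UNIV (\<lambda>_. measure_pmf samp) \<rightarrow>\<^sub>M count_space UNIV"
  proof (rule measurable_compose_countable'[where f = "\<lambda>w om. ?step w (om (j, Suc t))" and g = ?st and I = "range ?st"])
    fix w
    show "(\<lambda>om. ?step w (om (j, Suc t))) \<in> PiM UNIV (\<lambda>_. measure_pmf samp) \<rightarrow>\<^sub>M count_space UNIV"
      by (rule measurable_compose[OF measurable_component_singleton]) auto
    show "?st \<in> PiM UNIV (\<lambda>_. measure_pmf samp) \<rightarrow>\<^sub>M count_space (range ?st)"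
      by (rule measurable_count_space_extend[OF subset_UNIV _ IH(2)]) auto
  qed (rule IH(1))
  ultimately show ?case by (simp only: sarah_st_Suc)
qed (simp_all add: image_constant_conv)

lemma integrable_sarah_st:
  fixes samp :: "nat set pmf" and h :: "_ \<Rightarrow> real"
  assumes "finite (set_pmf samp)"
  shows "integrable (PiM UNIV (\<lambda>_. measure_pmf samp)) (\<lambda>om. h (sarah_st n g p \<eta> m sel x0 om j t))"
proof -
  let ?M = "PiM (UNIV :: (nat \<times> nat) set) (\<lambda>_. measure_pmf samp)"
  let ?st = "\<lambda>om. sarah_st n g p \<eta> m sel x0 om j t"
  let ?K = "?st ` (UNIV \<rightarrow> set_pmf samp)"
  interpret prob_space ?M
    by (intro prob_space_PiM) (simp add: prob_space_measure_pmf)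
  have "finite ?K"
    using assms by (rule sarah_st_finite_image)
  show ?thesis
  proof (rule integrable_const_bound[where B = "\<Sum>w\<in>?K. \<bar>h w\<bar>"])
    show "AE om in ?M. norm (h (?st om)) \<le> (\<Sum>w\<in>?K. \<bar>h w\<bar>)"
      using AE_PiM_in_set_pmf[of samp]
    proof eventually_elim
      case (elim om)
      then show ?case
        unfolding real_norm_def by (intro member_le_sum \<open>finite ?K\<close>) auto
    qed
    show "(\<lambda>om. h (?st om)) \<in> borel_measurable ?M"
      by (rule measurable_compose[OF conjunct2[OF sarah_st_measurable]]) simp
  qed
qed

locale eso_sampling =
  fixes n :: nat and samp :: "nat set pmf" and v :: "nat \<Rightarrow> real"
  assumes sample_subset: "\<And>S. S \<in> set_pmf samp \<Longrightarrow> S \<subseteq> {1..n}"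
    and marg_pos: "\<And>i. i \<in> {1..n} \<Longrightarrow> 0 < marg samp i"
    and ESO: "loewner_le n (\<lambda>i k. pairprob samp i k - marg samp i * marg samp k)
                (diag_mat (\<lambda>i. marg samp i * v i))"
begin

lemma finite_set_pmf_samp: "finite (set_pmf samp)"
  by (rule finite_subset[of _ "Pow {1..n}"]) (use sample_subset in auto)

lemma ESO_weight_nonneg:
  assumes "i \<in> {1..n}"
  shows "0 \<le> v i"
proof -
  have "marg samp i - marg samp i * marg samp i \<le> marg samp i * v i"
    using loewner_le_diag_mat_entry[OF ESO assms] by (simp add: pairprob_def marg_def)
  moreover have "marg samp i * marg samp i \<le> marg samp i"
    using marg_pos[OF assms] by (simp add: marg_def mult_left_le)
  ultimately have "0 \<le> marg samp i * v i" by linarith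
  then show ?thesis
    using marg_pos[OF assms] by (simp add: zero_le_mult_iff)
qed

lemma sample_sum_variance_bound:
  fixes b :: "nat \<Rightarrow> 'a::euclidean_space"
  shows "(\<integral>S. (norm (D + (\<Sum>i\<in>S. (1 / marg samp i) *\<^sub>R b i) - (\<Sum>i\<in>{1..n}. b i)))\<^sup>2 \<partial>samp)
       \<le> (norm D)\<^sup>2 + (\<Sum>i\<in>{1..n}. v i / marg samp i * (norm (b i))\<^sup>2)"
proof -
  let ?p = "marg samp"
  let ?c = "\<lambda>i. (1 / ?p i) *\<^sub>R b i"
  have centered: "D + (\<Sum>i\<in>S. ?c i) - (\<Sum>i\<in>{1..n}. b i)
      = D + (\<Sum>i\<in>{1..n}. (indicator {S. i \<in> S} S - ?p i) *\<^sub>R ?c i)" if "S \<in> set_pmf samp" for S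
  proof -
    have "(\<Sum>i\<in>{1..n}. indicator {S. i \<in> S} S *\<^sub>R ?c i) = (\<Sum>i\<in>{1..n}. if i \<in> S then ?c i else 0)"
      by (intro sum.cong) (simp_all add: indicator_def)
    also have "\<dots> = (\<Sum>i\<in>{1..n} \<inter> S. ?c i)"
      by (simp add: sum.inter_restrict)
    also have "{1..n} \<inter> S = S"
      using sample_subset[OF that] by blast
    finally have sampled: "(\<Sum>i\<in>{1..n}. indicator {S. i \<in> S} S *\<^sub>R ?c i) = (\<Sum>i\<in>S. ?c i)" .
    have full: "(\<Sum>i\<in>{1..n}. ?p i *\<^sub>R ?c i) = (\<Sum>i\<in>{1..n}. b i)"
      using marg_pos by (intro sum.cong) (simp_all add: less_imp_neq[symmetric])
    have "D + (\<Sum>i\<in>{1..n}. (indicator {S. i \<in> S} S - ?p i) *\<^sub>R ?c i)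
        = D + ((\<Sum>i\<in>{1..n}. indicator {S. i \<in> S} S *\<^sub>R ?c i) - (\<Sum>i\<in>{1..n}. ?p i *\<^sub>R ?c i))"
      by (simp only: scaleR_diff_left sum_subtractf)
    then show ?thesis
      unfolding sampled full by (simp only: add_diff_eq)
  qed
  have "(\<integral>S. (norm (D + (\<Sum>i\<in>S. ?c i) - (\<Sum>i\<in>{1..n}. b i)))\<^sup>2 \<partial>samp)
      = (\<integral>S. (norm (D + (\<Sum>i\<in>{1..n}. (indicator {S. i \<in> S} S - ?p i) *\<^sub>R ?c i)))\<^sup>2 \<partial>samp)"
    by (intro integral_cong_AE AE_pmfI) (simp_all only: centered, simp_all)
  also have "\<dots> = (norm D)\<^sup>2 + (\<Sum>i\<in>{1..n}. \<Sum>k\<in>{1..n}. (pairprob samp i k - ?p i * ?p k) * (?c i \<bullet> ?c k))"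
    by (rule integral_norm2_centered_sample_sum) simp
  also have "\<dots> \<le> (norm D)\<^sup>2 + (\<Sum>i\<in>{1..n}. ?p i * v i * (norm (?c i))\<^sup>2)"
    using loewner_le_diag_mat_inner[OF ESO, of ?c] by simp
  also have "(\<Sum>i\<in>{1..n}. ?p i * v i * (norm (?c i))\<^sup>2) = (\<Sum>i\<in>{1..n}. v i / ?p i * (norm (b i))\<^sup>2)"
    using marg_pos by (intro sum.cong) (simp_all add: power2_eq_square field_simps)
  finally show ?thesis .
qed

end

locale prox_sarah_as = eso_sampling n samp v
  for n :: nat and samp :: "nat set pmf" and v :: "nat \<Rightarrow> real" +
  fixes g :: "nat \<Rightarrow> 'a::euclidean_space \<Rightarrow> 'a" and L :: "nat \<Rightarrow> real"
    and \<eta> :: real and m :: nat and sel :: "nat \<Rightarrow> nat \<Rightarrow> 'a \<Rightarrow> 'a" and x0 :: 'a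
  assumes lipschitz: "\<And>i x y. i \<in> {1..n} \<Longrightarrow> norm (g i x - g i y) \<le> L i * norm (x - y)"
begin

abbreviation "M \<equiv> PiM (UNIV :: (nat \<times> nat) set) (\<lambda>_. measure_pmf samp)"
abbreviation "st \<equiv> sarah_st n g (marg samp) \<eta> m sel x0"
abbreviation "X \<equiv> sarah_x n g (marg samp) \<eta> m sel x0"
abbreviation "V \<equiv> sarah_V n g (marg samp) \<eta> m sel x0"
abbreviation "Q \<equiv> \<Sum>i\<in>{1..n}. v i * (L i)\<^sup>2 / (marg samp i * (real n)\<^sup>2)"

lemma estimator_variance_update:
  "(\<integral>S. (norm ((\<Sum>i\<in>S. (1 / (real n * marg samp i)) *\<^sub>R (g i xc - g i xp)) + Vp - full_gradient n g xc))\<^sup>2 \<partial>samp)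
     \<le> (norm (Vp - full_gradient n g xp))\<^sup>2 + Q * (norm (xc - xp))\<^sup>2"
proof -
  define b where "b i = (1 / real n) *\<^sub>R (g i xc - g i xp)" for i
  have "(\<Sum>i\<in>S. (1 / (real n * marg samp i)) *\<^sub>R (g i xc - g i xp)) + Vp - full_gradient n g xc
      = (Vp - full_gradient n g xp) + (\<Sum>i\<in>S. (1 / marg samp i) *\<^sub>R b i) - (\<Sum>i\<in>{1..n}. b i)" for S
    by (simp add: b_def full_gradient_def scaleR_diff_right sum_subtractf scaleR_sum_right algebra_simps)
  then have "(\<integral>S. (norm ((\<Sum>i\<in>S. (1 / (real n * marg samp i)) *\<^sub>R (g i xc - g i xp)) + Vp - full_gradient n g xc))\<^sup>2 \<partial>samp)
      \<le> (norm (Vp - full_gradient n g xp))\<^sup>2 + (\<Sum>i\<in>{1..n}. v i / marg samp i * (norm (b i))\<^sup>2)"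
    by (simp only: sample_sum_variance_bound)
  also have "(\<Sum>i\<in>{1..n}. v i / marg samp i * (norm (b i))\<^sup>2) \<le> Q * (norm (xc - xp))\<^sup>2"
    unfolding sum_distrib_right
  proof (rule sum_mono)
    fix i assume i: "i \<in> {1..n}"
    have "norm (b i) \<le> L i * norm (xc - xp) / real n"
      using lipschitz[OF i] by (simp add: b_def divide_right_mono)
    then have "(norm (b i))\<^sup>2 \<le> (L i * norm (xc - xp) / real n)\<^sup>2"
      by (rule power_mono) simp
    then have "v i / marg samp i * (norm (b i))\<^sup>2 \<le> v i / marg samp i * (L i * norm (xc - xp) / real n)\<^sup>2"
      using ESO_weight_nonneg[OF i] marg_pos[OF i] by (intro mult_left_mono) simp_all
    then show "v i / marg samp i * (norm (b i))\<^sup>2 \<le> v i * (L i)\<^sup>2 / (marg samp i * (real n)\<^sup>2) * (norm (xc - xp))\<^sup>2"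
      by (simp add: power_mult_distrib power_divide)
  qed
  finally show ?thesis by simp
qed

lemma conditional_variance_step:
  fixes om :: "nat \<times> nat \<Rightarrow> nat set"
  shows "(\<integral>S. (norm (V (om((j, Suc t) := S)) j (Suc t) - full_gradient n g (X (om((j, Suc t) := S)) j (Suc t))))\<^sup>2 \<partial>samp)
     \<le> (norm (V om j t - full_gradient n g (X om j t)))\<^sup>2 + Q * (norm (X om j (Suc t) - X om j t))\<^sup>2"
proof -
  obtain xp Vp xc where w: "st om j t = (xp, Vp, xc)"
    by (cases "st om j t") auto
  have past: "st (om((j, Suc t) := S)) j t = st om j t" for S
    by (rule sarah_st_nonanticipating) auto
  have "V (om((j, Suc t) := S)) j (Suc t) = (\<Sum>i\<in>S. (1 / (real n * marg samp i)) *\<^sub>R (g i xc - g i xp)) + Vp"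
    and "X (om((j, Suc t) := S)) j (Suc t) = xc" for S
    by (simp_all add: sarah_V_def sarah_x_def sarah_st_Suc past w sarah_step_def Let_def del: sarah_st.simps)
  moreover have "V om j t = Vp" "X om j t = xp" "X om j (Suc t) = xc"
    by (simp_all add: sarah_V_def sarah_x_Suc w) (simp add: sarah_x_def w)
  ultimately show ?thesis
    using estimator_variance_update[of xc xp Vp] by simp
qed

lemma expected_variance_step:
  "(\<integral>om. (norm (V om j (Suc t) - full_gradient n g (X om j (Suc t))))\<^sup>2 \<partial>M)
     \<le> (\<integral>om. (norm (V om j t - full_gradient n g (X om j t)))\<^sup>2 \<partial>M)
       + Q * (\<integral>om. (norm (X om j (Suc t) - X om j t))\<^sup>2 \<partial>M)"
proof -
  let ?a = "(j, Suc t)"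
  let ?N = "PiM (UNIV - {?a}) (\<lambda>_. measure_pmf samp)"
  define err where "err om k = (norm (V om j k - full_gradient n g (X om j k)))\<^sup>2" for om k
  define gap where "gap om = (norm (X om j (Suc t) - X om j t))\<^sup>2" for om
  define bound where "bound om = err om t + Q * gap om" for om
  have err_integrable: "integrable M (\<lambda>om. err om k)" for k
    unfolding err_def sarah_V_def sarah_x_def
    by (rule integrable_sarah_st[OF finite_set_pmf_samp, where h = "\<lambda>w. (norm (fst (snd w) - full_gradient n g (fst w)))\<^sup>2"])
  have gap_integrable: "integrable M gap"
    unfolding gap_def sarah_x_Suc unfolding sarah_x_def
    by (rule integrable_sarah_st[OF finite_set_pmf_samp, where h = "\<lambda>w. (norm (snd (snd w) - fst w))\<^sup>2"])
  have bound_integrable: "integrable M bound"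
    unfolding bound_def using err_integrable gap_integrable by simp
  have conditional: "(\<integral>S. err (om(?a := S)) (Suc t) \<partial>samp) \<le> (\<integral>S. bound (om(?a := S)) \<partial>samp)" for om
  proof -
    have "st (om(?a := S)) j t = st om j t" for S
      by (rule sarah_st_nonanticipating) auto
    then have "bound (om(?a := S)) = bound om" for S
      unfolding bound_def err_def gap_def sarah_x_Suc unfolding sarah_V_def sarah_x_def by simp
    then show ?thesis
      using conditional_variance_step[of om j t] by (simp add: bound_def err_def gap_def)
  qed
  have "(\<integral>om. err om (Suc t) \<partial>M) = (\<integral>Y. (\<integral>S. err (Y(?a := S)) (Suc t) \<partial>samp) \<partial>?N)"
    by (rule integral_PiM_split_coordinate) (simp_all add: prob_space_measure_pmf err_integrable)
  also have "\<dots> \<le> (\<integral>Y. (\<integral>S. bound (Y(?a := S)) \<partial>samp) \<partial>?N)"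
    by (intro integral_mono conditional integral_PiM_split_coordinate(2))
      (simp_all add: prob_space_measure_pmf err_integrable bound_integrable)
  also have "\<dots> = (\<integral>om. bound om \<partial>M)"
    by (rule integral_PiM_split_coordinate(1)[symmetric]) (simp_all add: prob_space_measure_pmf bound_integrable)
  also have "\<dots> = (\<integral>om. err om t \<partial>M) + Q * (\<integral>om. gap om \<partial>M)"
    unfolding bound_def using err_integrable gap_integrable by simp
  finally show ?thesis
    unfolding err_def gap_def .
qed

lemma expected_variance_bound:
  assumes "1 \<le> j"
  shows "(\<integral>om. (norm (V om j t - full_gradient n g (X om j t)))\<^sup>2 \<partial>M)
    \<le> Q * (\<Sum>k\<in>{1..t}. \<integral>om. (norm (X om j k - X om j (k - 1)))\<^sup>2 \<partial>M)"
proof (induction t)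
  case 0
  then show ?case
    by (simp add: sarah_V_epoch_start[OF assms])
next
  case (Suc t)
  then show ?case
    using expected_variance_step[of j t] by (simp add: distrib_left)
qed

end

theorem lemma5p1:
  fixes n m :: nat
    and f :: "nat \<Rightarrow> real ^ 'd \<Rightarrow> real"
    and g :: "nat \<Rightarrow> real ^ 'd \<Rightarrow> real ^ 'd"
    and gf :: "real ^ 'd \<Rightarrow> real ^ 'd"
    and L v :: "nat \<Rightarrow> real"
    and samp :: "nat set pmf"
    and r :: "real ^ 'd \<Rightarrow> real"
    and \<eta> :: real
    and sel :: "nat \<Rightarrow> nat \<Rightarrow> real ^ 'd \<Rightarrow> real ^ 'd"
    and x0 :: "real ^ 'd"
    and j t :: nat
  assumes grad_fi: "\<And>i x. i \<in> {1..n} \<Longrightarrow> (f i has_derivative (\<lambda>h. g i x \<bullet> h)) (at x)"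
    and lip: "\<And>i x y. i \<in> {1..n} \<Longrightarrow> norm (g i x - g i y) \<le> L i * norm (x - y)"
    and grad_f: "\<And>x. ((\<lambda>y. (1 / real n) * (\<Sum>i\<in>{1..n}. f i y)) has_derivative (\<lambda>h. gf x \<bullet> h)) (at x)"
    and samp_sub: "\<And>S. S \<in> set_pmf samp \<Longrightarrow> S \<subseteq> {1..n}"
    and proper: "\<And>i. i \<in> {1..n} \<Longrightarrow> marg samp i > 0"
    and ESO: "loewner_le n (\<lambda>i k. pairprob samp i k - marg samp i * marg samp k)
                           (diag_mat (\<lambda>i. marg samp i * v i))"
    and eta_pos: "\<eta> > 0"
    and sel: "\<And>j t y. sel j t y \<in> prox_set \<eta> r y"
    and j: "j \<ge> 1"
    and t: "1 \<le> t" "t \<le> m"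
  shows
    "(let M = PiM (UNIV :: (nat \<times> nat) set) (\<lambda>_. measure_pmf samp);
          p = marg samp;
          X = sarah_x n g p \<eta> m sel x0;
          V = sarah_V n g p \<eta> m sel x0;
          Q = (\<Sum>i\<in>{1..n}. v i * (L i)\<^sup>2 / (p i * (real n)\<^sup>2))
      in (\<integral>om. (norm (V om j t - gf (X om j t)))\<^sup>2 \<partial>M)
         \<le> Q * (\<Sum>k\<in>{1..t}. \<integral>om. (norm (X om j k - X om j (k - 1)))\<^sup>2 \<partial>M))"
proof -
  interpret prox_sarah_as n samp v g L \<eta> m sel x0
    by unfold_locales (fact samp_sub proper ESO lip)+
  have "gf x = full_gradient n g x" for x
    by (rule gradient_of_average[OF grad_fi grad_f])
  then have "gf = full_gradient n g" ..
  then show ?thesis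
    using expected_variance_bound[OF j, of t] by (simp add: Let_def)
qed

end
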